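(* Assume in addition that $\mu\ll\mathrm{Leb}$ with continuous density $\psi=d\mu/d\mathrm{Leb}$, let $\alpha_0=\beta_0/\mathrm{Leb}(M)$, and assume $(\mathfrak c+1)\beta_0<1$. Then for every $\epsilon>0$ there is a constant $c=c(\epsilon)>0$ such that for every $\underline\omega\in\mathcal G$ there exist points $\hat p_-\in\{\psi\ge\alpha_0\}$, $\hat p\in M$ and a sequence $n_i\to\infty$ with $$\mu^n_{\underline\omega}\Big(M^n_{\underline\omega}\cap\mathcal B(\hat p,\epsilon)\cap f^n_{\theta^{-n}\underline\omega}\mathcal B(\hat p_-,\epsilon)\Big)\ge c\qquad\text{for all } n=n_i.$$
   Context: $\Omega$ Polish with Borel probability $P$, $M$ compact Riemannian manifold with volume $\mathrm{Leb}$ and distance $d$, $\mathcal B(x,r)=\{y:d(x,y)<r\}$; $\omega\mapsto f_\omega\in\mathrm{Diff}^2(M)$ measurable; $\mathbb P=P^{\mathbb Z}$, $\theta$ the left shift, $\tau(x,\underline\omega)=(f_{\omega_1}x,\theta\underline\omega)$, $f^n_{\underline\omega}=f_{\omega_n}\circ\cdots\circ f_{\omega_1}$, $f^{-n}_{\underline\omega}=f^{-1}_{\omega_{-n+1}}\circ\cdots\circ f^{-1}_{\omega_0}$ ($n\ge1$), $\underline\omega^+=(\omega_k)_{k>0}$. $\mu$ is a stationary measure and $\mu^*$ the unique $\tau$-invariant probability projecting to $\mu\times P^{\mathbb Z^+}$. $\mu^n_{\underline\omega}=(f^n_{\theta^{-n}\underline\omega})_*\mu$. Fix $\beta_0>0$,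 $\mathfrak c>1$, a compact $\Theta_0\subset M\times\Omega^{\mathbb Z}$ with $\mu^*(\Theta_n)\ge1-\beta_0$ for all $n$, where $\Theta_n=\Theta_0\cap\tau^{-n}\Theta_0$; $\Theta_n^+$ is its image under $(x,\underline\omega)\mapsto(x,\underline\omega^+)$; $M^n_{\underline\omega}=\{x:(f^{-n}_{\underline\omega}x,(\theta^{-n}\underline\omega)^+)\in\Theta_n^+\}$; $\mathcal G^{(n)}=\{\underline\omega:\mu^n_{\underline\omega}(M^n_{\underline\omega})\ge1-\mathfrak c\beta_0\}$ and $\mathcal G=\bigcap_{N\ge1}\bigcup_{n\ge N}\mathcal G^{(n)}$. *)

theory Defs
  imports "HOL-Probability.Probability"
begin

text \<open>Random dynamical system conventions.  Sequences in Omega^Z are maps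
  int => 'w (product topology from Function_Topology); f w is the map f_omega.\<close>

definition shift :: "(int \<Rightarrow> 'w) \<Rightarrow> (int \<Rightarrow> 'w)" where
  "shift \<omega> = (\<lambda>k. \<omega> (k + 1))"

definition shift_inv :: "nat \<Rightarrow> (int \<Rightarrow> 'w) \<Rightarrow> (int \<Rightarrow> 'w)" where
  "shift_inv n \<omega> = (\<lambda>k. \<omega> (k - int n))"

text \<open>omega^+ = (omega_k)_{k>0}, indexed by nat: entry j is omega_{j+1}\<close>
definition plus_part :: "(int \<Rightarrow> 'w) \<Rightarrow> (nat \<Rightarrow> 'w)" where
  "plus_part \<omega> = (\<lambda>j. \<omega> (int j + 1))"

fun fiter :: "('w \<Rightarrow> 'm \<Rightarrow> 'm) \<Rightarrow> nat \<Rightarrow> (int \<Rightarrow> 'w) \<Rightarrow> 'm \<Rightarrow> 'm" where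
  "fiter f 0 \<omega> = id"
| "fiter f (Suc n) \<omega> = f (\<omega> (int (Suc n))) \<circ> fiter f n \<omega>"

fun fiter_inv :: "('w \<Rightarrow> 'm \<Rightarrow> 'm) \<Rightarrow> nat \<Rightarrow> (int \<Rightarrow> 'w) \<Rightarrow> 'm \<Rightarrow> 'm" where
  "fiter_inv f 0 \<omega> = id"
| "fiter_inv f (Suc n) \<omega> = inv (f (\<omega> (- int n))) \<circ> fiter_inv f n \<omega>"

definition skew :: "('w \<Rightarrow> 'm \<Rightarrow> 'm) \<Rightarrow> 'm \<times> (int \<Rightarrow> 'w) \<Rightarrow> 'm \<times> (int \<Rightarrow> 'w)" where
  "skew f p = (f (snd p 1) (fst p), shift (snd p))"

definition proj_plus :: "'m \<times> (int \<Rightarrow> 'w) \<Rightarrow> 'm \<times> (nat \<Rightarrow> 'w)" where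
  "proj_plus p = (fst p, plus_part (snd p))"

definition Theta :: "('w \<Rightarrow> 'm \<Rightarrow> 'm) \<Rightarrow> ('m \<times> (int \<Rightarrow> 'w)) set \<Rightarrow> nat
    \<Rightarrow> ('m \<times> (int \<Rightarrow> 'w)) set" where
  "Theta f Theta0 n = Theta0 \<inter> (skew f ^^ n) -` Theta0"

definition Theta_plus :: "('w \<Rightarrow> 'm \<Rightarrow> 'm) \<Rightarrow> ('m \<times> (int \<Rightarrow> 'w)) set \<Rightarrow> nat
    \<Rightarrow> ('m \<times> (nat \<Rightarrow> 'w)) set" where
  "Theta_plus f Theta0 n = proj_plus ` Theta f Theta0 n"

definition Mset :: "('w \<Rightarrow> 'm \<Rightarrow> 'm) \<Rightarrow> ('m \<times> (int \<Rightarrow> 'w)) set \<Rightarrow> nat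
    \<Rightarrow> (int \<Rightarrow> 'w) \<Rightarrow> 'm set" where
  "Mset f Theta0 n \<omega> =
     {x. (fiter_inv f n \<omega> x, plus_part (shift_inv n \<omega>)) \<in> Theta_plus f Theta0 n}"

definition mu_n :: "('w \<Rightarrow> 'm \<Rightarrow> 'm) \<Rightarrow> 'm measure \<Rightarrow> nat \<Rightarrow> (int \<Rightarrow> 'w) \<Rightarrow> 'm measure" where
  "mu_n f \<mu> n \<omega> = distr \<mu> \<mu> (fiter f n (shift_inv n \<omega>))"

definition Gn :: "('w \<Rightarrow> 'm \<Rightarrow> 'm) \<Rightarrow> 'm measure \<Rightarrow> ('m \<times> (int \<Rightarrow> 'w)) set
    \<Rightarrow> real \<Rightarrow> real \<Rightarrow> nat \<Rightarrow> (int \<Rightarrow> 'w) set" where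
  "Gn f \<mu> Theta0 cc \<beta>0 n =
     {\<omega>. measure (mu_n f \<mu> n \<omega>) (Mset f Theta0 n \<omega>) \<ge> 1 - cc * \<beta>0}"

definition Gset :: "('w \<Rightarrow> 'm \<Rightarrow> 'm) \<Rightarrow> 'm measure \<Rightarrow> ('m \<times> (int \<Rightarrow> 'w)) set
    \<Rightarrow> real \<Rightarrow> real \<Rightarrow> (int \<Rightarrow> 'w) set" where
  "Gset f \<mu> Theta0 cc \<beta>0 = (\<Inter>N\<in>{1..}. \<Union>n\<in>{N..}. Gn f \<mu> Theta0 cc \<beta>0 n)"

end

theory Submission
  imports Defs
begin

text \<open>Let \<open>S = {\<psi> \<ge> \<alpha>\<^sub>0}\<close>. Since \<open>\<psi> < \<alpha>\<^sub>0\<close> off \<open>S\<close>, \<open>\<mu>(M - S) \<le> \<alpha>\<^sub>0 Leb(M) = \<beta>\<^sub>0\<close>. As \<open>f\<^sup>n\<close> is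
  a homeomorphism, \<open>\<mu>\<^sup>n\<^sub>\<omega>(f\<^sup>n S) = \<mu>(S) \<ge> 1 - \<beta>\<^sub>0\<close>, so for \<open>\<omega>\<close> in the \<open>n\<close>-th good set the set
  \<open>M\<^sup>n\<^sub>\<omega> \<inter> f\<^sup>n S\<close> has \<open>\<mu>\<^sup>n\<^sub>\<omega>\<close>-measure at least \<open>\<delta> = 1 - (cc + 1)\<beta>\<^sub>0 > 0\<close>. Cover \<open>M\<close> by
  finitely many \<open>\<epsilon>\<close>-balls centred in \<open>C\<close> and the compact set \<open>S\<close> by finitely many \<open>\<epsilon>\<close>-balls
  centred in \<open>D \<subseteq> S\<close>. The sets \<open>M\<^sup>n\<^sub>\<omega> \<inter> B(p,\<epsilon>) \<inter> f\<^sup>n B(q,\<epsilon>)\<close>, \<open>(p,q) \<in> C \<times> D\<close>, cover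
  \<open>M\<^sup>n\<^sub>\<omega> \<inter> f\<^sup>n S\<close>, so one of them has measure at least \<open>c = \<delta>/(|C \<times> D| + 1)\<close>, which depends
  only on \<open>\<epsilon>\<close>. Since \<open>\<omega> \<in> \<G>\<close> is good for infinitely many \<open>n\<close>, some pair \<open>(p,q)\<close> is
  chosen along a subsequence \<open>n\<^sub>i\<close>.\<close>

lemma homeomorphism_fiter:
  assumes "\<And>w. homeomorphism UNIV UNIV (f w) (inv (f w))"
  shows "\<exists>h. homeomorphism UNIV UNIV (fiter f n \<omega>) h"
proof (induction n)
  case 0
  show ?case using homeomorphism_ident[of UNIV] by (auto simp: id_def)
next
  case (Suc n)
  then obtain h where "homeomorphism UNIV UNIV (fiter f n \<omega>) h" by blast
  then have "homeomorphism UNIV UNIV (fiter f (Suc n) \<omega>) (h \<circ> inv (f (\<omega> (int (Suc n)))))"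
    unfolding fiter.simps by (rule homeomorphism_compose[OF _ assms])
  then show ?case by blast
qed

lemma homeomorphism_UNIV_image_eq_vimage:
  assumes "homeomorphism UNIV UNIV g h"
  shows "g ` A = h -` A"
proof -
  have gh: "\<And>x. h (g x) = x" "\<And>y. g (h y) = y"
    using assms unfolding homeomorphism_def by auto
  show ?thesis
  proof
    show "g ` A \<subseteq> h -` A" using gh(1) by auto
    show "h -` A \<subseteq> g ` A" using gh(2) by (metis image_eqI subsetI vimageE)
  qed
qed

lemma homeomorphism_UNIV_image_borel:
  assumes "homeomorphism UNIV UNIV g h" "A \<in> sets borel"
  shows "g ` A \<in> sets borel"
proof -
  have "h \<in> borel_measurable borel"
    using assms(1) by (intro borel_measurable_continuous_onI) (simp add: homeomorphism_def)
  then have "h -` A \<inter> space borel \<in> sets borel"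
    using assms(2) by (rule measurable_sets)
  then show ?thesis
    using homeomorphism_UNIV_image_eq_vimage[OF assms(1)] by simp
qed

lemma measurable_homeomorphism_UNIV:
  assumes "sets M = sets borel" "homeomorphism UNIV UNIV g h"
  shows "g \<in> measurable M M"
proof -
  have "g \<in> borel_measurable borel"
    using assms(2) by (intro borel_measurable_continuous_onI) (simp add: homeomorphism_def)
  then show ?thesis
    by (simp only: measurable_cong_sets[OF assms(1) assms(1)])
qed

lemma measure_distr_homeomorphism_image:
  assumes "sets M = sets borel" "homeomorphism UNIV UNIV g h" "A \<in> sets borel"
  shows "measure (distr M M g) (g ` A) = measure M A"
proof -
  have space: "space M = UNIV" using sets_eq_imp_space_eq[OF assms(1)] by simp
  have "g \<in> measurable M M" using assms(1,2) by (rule measurable_homeomorphism_UNIV)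
  moreover have "g ` A \<in> sets M"
    using homeomorphism_UNIV_image_borel[OF assms(2,3)] assms(1) by simp
  moreover have "inj g"
    using homeomorphism_apply1[OF assms(2)] by (intro inj_on_inverseI[where g = h]) auto
  then have "g -` (g ` A) = A"
    by (rule inj_vimage_image_eq)
  ultimately show ?thesis by (simp add: measure_distr space)
qed

lemma (in prob_space) prob_Int_ge:
  assumes "A \<in> events" "B \<in> events"
  shows "prob A + prob B - 1 \<le> prob (A \<inter> B)"
proof -
  have "prob (A \<union> B) = prob A + prob B - prob (A \<inter> B)"
    using assms by (intro measure_Un3) (auto simp: fmeasurable_eq_sets)
  then show ?thesis using prob_le_1[of "A \<union> B"] by linarith
qed

lemma (in finite_measure) exists_large_piece_of_finite_cover:
  assumes "finite K" "E ` K \<subseteq> sets M" "A \<subseteq> (\<Union>k\<in>K. E k)" "0 < \<delta>" "\<delta> \<le> measure M A"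
  shows "\<exists>k\<in>K. \<delta> / (card K + 1) \<le> measure M (E k)"
proof (rule ccontr)
  assume "\<not> ?thesis"
  then have small: "\<And>k. k \<in> K \<Longrightarrow> measure M (E k) \<le> \<delta> / (card K + 1)" by auto
  have "\<delta> \<le> measure M (\<Union>k\<in>K. E k)"
    using assms by (intro order_trans[OF assms(5) finite_measure_mono]) auto
  also have "\<dots> \<le> (\<Sum>k\<in>K. measure M (E k))"
    by (rule finite_measure_subadditive_finite[OF assms(1,2)])
  also have "\<dots> \<le> card K * (\<delta> / (card K + 1))"
    using sum_bounded_above[of K _ "\<delta> / (card K + 1)"] small by simp
  also have "\<dots> < \<delta>"
    using assms(4) by (simp add: field_simps)
  finally show False by simp
qed

lemma measure_density_superlevel_set_ge:
  fixes \<psi> :: "'a \<Rightarrow> real"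
  assumes "finite_measure L" "\<psi> \<in> borel_measurable L" "0 \<le> \<beta>"
    and "prob_space (density L \<psi>)"
  shows "1 - \<beta> \<le> measure (density L \<psi>) {x \<in> space L. \<beta> / measure L (space L) \<le> \<psi> x}"
proof -
  interpret L: finite_measure L by fact
  interpret \<mu>: prob_space "density L \<psi>" by fact
  define \<alpha> where "\<alpha> = \<beta> / measure L (space L)"
  have "0 \<le> \<alpha>" using assms(3) by (simp add: \<alpha>_def)
  let ?low = "{x \<in> space L. \<psi> x < \<alpha>}"
  have low_sets: "?low \<in> sets L" using assms(2) by measurable
  have "emeasure (density L \<psi>) ?low = (\<integral>\<^sup>+ x. ennreal (\<psi> x) * indicator ?low x \<partial>L)"
    using assms(2) low_sets by (intro emeasure_density) auto
  also have "\<dots> \<le> (\<integral>\<^sup>+ x. ennreal \<alpha> * indicator ?low x \<partial>L)"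
    by (intro nn_integral_mono) (auto simp: indicator_def intro: ennreal_leI)
  also have "\<dots> = ennreal \<alpha> * emeasure L ?low"
    using low_sets by (simp add: nn_integral_cmult_indicator)
  also have "\<dots> \<le> ennreal \<alpha> * emeasure L (space L)"
    by (intro mult_left_mono emeasure_mono) auto
  also have "\<dots> = ennreal (\<alpha> * measure L (space L))"
    using \<open>0 \<le> \<alpha>\<close> by (simp add: L.emeasure_eq_measure ennreal_mult)
  finally have "measure (density L \<psi>) ?low \<le> \<alpha> * measure L (space L)"
    using \<open>0 \<le> \<alpha>\<close> by (simp add: \<mu>.emeasure_eq_measure)
  also have "\<dots> \<le> \<beta>"
    using assms(3) by (cases "measure L (space L) = 0") (auto simp: \<alpha>_def)
  moreover have "{x \<in> space L. \<alpha> \<le> \<psi> x} = space (density L \<psi>) - ?low"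
    by auto
  moreover have "?low \<in> \<mu>.events" using low_sets by simp
  ultimately show ?thesis using \<mu>.prob_compl[of ?low] by (simp add: \<alpha>_def)
qed

lemma large_ball_pair:
  fixes g :: "'m::metric_space \<Rightarrow> 'm"
  assumes M: "prob_space M" "sets M = sets borel"
    and g: "homeomorphism UNIV UNIV g h"
    and S: "S \<in> sets borel" "1 - b \<le> measure M S"
    and A: "1 - a \<le> measure (distr M M g) A"
    and ab: "a + b < 1"
    and C: "finite C" "UNIV \<subseteq> (\<Union>p\<in>C. ball p \<epsilon>)"
    and D: "finite D" "S \<subseteq> (\<Union>q\<in>D. ball q \<epsilon>)"
  shows "\<exists>(p, q) \<in> C \<times> D. (1 - a - b) / (card (C \<times> D) + 1)
           \<le> measure (distr M M g) (A \<inter> ball p \<epsilon> \<inter> g ` ball q \<epsilon>)"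
proof -
  let ?\<nu> = "distr M M g"
  interpret \<nu>: prob_space ?\<nu>
    using M(1) measurable_homeomorphism_UNIV[OF M(2) g] by (rule prob_space.prob_space_distr)
  have sets_\<nu>: "sets ?\<nu> = sets borel" using M(2) by simp
  have "b \<ge> 0"
    using S(2) prob_space.prob_le_1[OF M(1), of S] by linarith
  \<comment> \<open>a non-measurable set has measure 0, but \<open>A\<close> has measure at least \<open>1 - a > b \<ge> 0\<close>\<close>
  then have A_sets: "A \<in> \<nu>.events"
    using A ab measure_notin_sets[of A ?\<nu>] by (cases "A \<in> \<nu>.events") auto
  have gS_sets: "g ` S \<in> \<nu>.events"
    using homeomorphism_UNIV_image_borel[OF g S(1)] sets_\<nu> by simp
  define E where "E = (\<lambda>(p, q). A \<inter> ball p \<epsilon> \<inter> g ` ball q \<epsilon>)"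
  have "1 - a - b \<le> \<nu>.prob (A \<inter> g ` S)"
    using \<nu>.prob_Int_ge[OF A_sets gS_sets] A S(2)
      measure_distr_homeomorphism_image[OF M(2) g S(1)] by linarith
  moreover have "A \<inter> g ` S \<subseteq> (\<Union>k\<in>C \<times> D. E k)"
    using C(2) D(2) unfolding E_def by fastforce
  moreover have "E ` (C \<times> D) \<subseteq> \<nu>.events"
  proof -
    have "A \<inter> ball p \<epsilon> \<inter> g ` ball q \<epsilon> \<in> \<nu>.events" for p q
      using A_sets homeomorphism_UNIV_image_borel[OF g borel_open[OF open_ball]] sets_\<nu> by simp
    then show ?thesis unfolding E_def by auto
  qed
  moreover have "0 < 1 - a - b" using ab by simp
  ultimately obtain k where "k \<in> C \<times> D" "(1 - a - b) / (card (C \<times> D) + 1) \<le> \<nu>.prob (E k)"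
    using \<nu>.exists_large_piece_of_finite_cover[of "C \<times> D" E] C(1) D(1) by blast
  then show ?thesis unfolding E_def by auto
qed

lemma infinite_Gn_of_Gset:
  assumes "\<omega> \<in> Gset f \<mu> Theta0 cc \<beta>0"
  shows "infinite {n. \<omega> \<in> Gn f \<mu> Theta0 cc \<beta>0 n}"
  unfolding infinite_nat_iff_unbounded_le
proof
  fix m :: nat
  have "\<omega> \<in> (\<Union>n\<in>{Suc m..}. Gn f \<mu> Theta0 cc \<beta>0 n)"
    using assms unfolding Gset_def by (rule INT_D) simp
  then show "\<exists>n\<ge>m. n \<in> {n. \<omega> \<in> Gn f \<mu> Theta0 cc \<beta>0 n}"
    by (auto intro: Suc_leD)
qed

lemma infinitely_often_same_choice:
  fixes N :: "nat set"
  assumes "infinite N" "finite K" "\<And>n. n \<in> N \<Longrightarrow> \<exists>k\<in>K. Q n k"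
  shows "\<exists>k\<in>K. \<exists>r :: nat \<Rightarrow> nat. strict_mono r \<and> (\<forall>i. Q (r i) k)"
proof -
  define sel where "sel n = (SOME k. k \<in> K \<and> Q n k)" for n
  have sel: "sel n \<in> K" "Q n (sel n)" if "n \<in> N" for n
    using someI_ex[OF assms(3)[OF that, unfolded Bex_def]] that by (auto simp: sel_def)
  have "finite (sel ` N)" using sel(1) assms(2) by (meson finite_subset image_subsetI)
  then obtain n0 where n0: "n0 \<in> N" "infinite {n \<in> N. sel n = sel n0}"
    using pigeonhole_infinite[OF assms(1)] by blast
  obtain r :: "nat \<Rightarrow> nat" where r: "strict_mono r" "\<And>i. r i \<in> {n \<in> N. sel n = sel n0}"
    using infinite_enumerate[OF n0(2)] by blast
  have "Q (r i) (sel n0)" for i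
    using sel(2)[of "r i"] r(2)[of i] by simp
  then show ?thesis using sel(1)[OF n0(1)] r(1) by blast
qed

theorem lemma4p3:
  fixes f :: "'w::polish_space \<Rightarrow> 'm::metric_space \<Rightarrow> 'm"
    and P :: "'w measure"
    and Leb :: "'m measure"
    and \<mu> :: "'m measure"
    and \<mu>star :: "('m \<times> (int \<Rightarrow> 'w)) measure"
    and \<psi> :: "'m \<Rightarrow> real"
    and Theta0 :: "('m \<times> (int \<Rightarrow> 'w)) set"
    and \<beta>0 cc :: real
  assumes compactM: "compact (UNIV :: 'm set)"
    and P_prob: "prob_space P" and P_sets: "sets P = sets borel"
    and Leb_fin: "finite_measure Leb" and Leb_sets: "sets Leb = sets borel"
    and f_homeo: "\<And>w. homeomorphism UNIV UNIV (f w) (inv (f w))"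
    and f_meas: "(\<lambda>p. f (snd p) (fst p)) \<in> borel_measurable (borel \<Otimes>\<^sub>M P)"
    and mu_prob: "prob_space \<mu>"
    and mu_stat: "\<And>A. A \<in> sets borel \<Longrightarrow>
                    emeasure \<mu> A = (\<integral>\<^sup>+ w. emeasure \<mu> (f w -` A) \<partial>P)"
    and psi_cont: "continuous_on UNIV \<psi>"
    and mu_dens: "\<mu> = density Leb (\<lambda>x. ennreal (\<psi> x))"
    and mustar_prob: "prob_space \<mu>star" and mustar_sets: "sets \<mu>star = sets borel"
    and mustar_inv: "distr \<mu>star \<mu>star (skew f) = \<mu>star"
    and mustar_proj: "distr \<mu>star (\<mu> \<Otimes>\<^sub>M (\<Pi>\<^sub>M j\<in>(UNIV::nat set). P)) proj_plus
                        = \<mu> \<Otimes>\<^sub>M (\<Pi>\<^sub>M j\<in>(UNIV::nat set). P)"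
    and beta_pos: "\<beta>0 > 0" and cc_gt: "cc > 1"
    and Theta0_compact: "compact Theta0"
    and Theta_big: "\<And>n. measure \<mu>star (Theta f Theta0 n) \<ge> 1 - \<beta>0"
    and small: "(cc + 1) * \<beta>0 < 1"
  shows "\<forall>\<epsilon>>0. \<exists>c>0. \<forall>\<omega>\<in>Gset f \<mu> Theta0 cc \<beta>0.
           \<exists>pm p (ni :: nat \<Rightarrow> nat).
              \<psi> pm \<ge> \<beta>0 / measure Leb UNIV \<and>
              filterlim ni at_top sequentially \<and>
              (\<forall>i. measure (mu_n f \<mu> (ni i) \<omega>)
                      (Mset f Theta0 (ni i) \<omega> \<inter> ball p \<epsilon>
                        \<inter> fiter f (ni i) (shift_inv (ni i) \<omega>) ` ball pm \<epsilon>) \<ge> c)"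
proof (intro allI impI)
  fix \<epsilon> :: real
  assume "\<epsilon> > 0"
  define S where "S = {x. \<beta>0 / measure Leb UNIV \<le> \<psi> x}"
  have space_Leb: "space Leb = UNIV" using sets_eq_imp_space_eq[OF Leb_sets] by simp
  have sets_\<mu>: "sets \<mu> = sets borel" using mu_dens Leb_sets by simp
  have "closed S" unfolding S_def using closed_Collect_le[OF continuous_on_const psi_cont] by simp
  then have S_borel: "S \<in> sets borel" and "compact S"
    using closed_Int_compact[OF _ compactM] by auto
  have "\<psi> \<in> borel_measurable Leb"
    using borel_measurable_continuous_onI[OF psi_cont] by (simp add: measurable_cong_sets[OF Leb_sets])
  then have S_mass: "1 - \<beta>0 \<le> measure \<mu> S"
    using measure_density_superlevel_set_ge[OF Leb_fin _ _ mu_prob[unfolded mu_dens]] beta_pos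
    unfolding mu_dens S_def space_Leb by simp
  obtain C :: "'m set" where C: "finite C" "UNIV \<subseteq> (\<Union>p\<in>C. ball p \<epsilon>)"
    using seq_compact_imp_totally_bounded[OF compact_imp_seq_compact[OF compactM], rule_format,
        OF \<open>\<epsilon> > 0\<close>] by blast
  obtain D where D: "finite D" "D \<subseteq> S" "S \<subseteq> (\<Union>q\<in>D. ball q \<epsilon>)"
    using seq_compact_imp_totally_bounded[OF compact_imp_seq_compact[OF \<open>compact S\<close>], rule_format,
        OF \<open>\<epsilon> > 0\<close>] by blast
  define c where "c = (1 - cc * \<beta>0 - \<beta>0) / (card (C \<times> D) + 1)"
  define Q where "Q n \<omega> = (\<lambda>(p, q). c \<le> measure (mu_n f \<mu> n \<omega>)
    (Mset f Theta0 n \<omega> \<inter> ball p \<epsilon> \<inter> fiter f n (shift_inv n \<omega>) ` ball q \<epsilon>))" for n \<omega>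
  have good_time: "\<exists>k\<in>C \<times> D. Q n \<omega> k" if "\<omega> \<in> Gn f \<mu> Theta0 cc \<beta>0 n" for n \<omega>
  proof -
    obtain h where h: "homeomorphism UNIV UNIV (fiter f n (shift_inv n \<omega>)) h"
      using homeomorphism_fiter[of f, OF f_homeo] by blast
    have "1 - cc * \<beta>0 \<le> measure (distr \<mu> \<mu> (fiter f n (shift_inv n \<omega>))) (Mset f Theta0 n \<omega>)"
      using that unfolding Gn_def mu_n_def by simp
    moreover have "cc * \<beta>0 + \<beta>0 < 1" using small by (simp add: algebra_simps)
    ultimately show ?thesis
      using large_ball_pair[OF mu_prob sets_\<mu> h S_borel S_mass _ _ C D(1,3)]
      unfolding Q_def c_def mu_n_def by simp
  qed
  have "c > 0" using small by (simp add: c_def algebra_simps)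
  moreover have "\<exists>k\<in>C \<times> D. \<exists>r :: nat \<Rightarrow> nat. strict_mono r \<and> (\<forall>i. Q (r i) \<omega> k)"
    if "\<omega> \<in> Gset f \<mu> Theta0 cc \<beta>0" for \<omega>
    using infinitely_often_same_choice[OF infinite_Gn_of_Gset[OF that], of "C \<times> D" "\<lambda>n. Q n \<omega>"]
      C(1) D(1) good_time by blast
  ultimately show "\<exists>c>0. \<forall>\<omega>\<in>Gset f \<mu> Theta0 cc \<beta>0. \<exists>pm p ni. \<psi> pm \<ge> \<beta>0 / measure Leb UNIV \<and>
    filterlim ni at_top sequentially \<and> (\<forall>i. measure (mu_n f \<mu> (ni i) \<omega>)
      (Mset f Theta0 (ni i) \<omega> \<inter> ball p \<epsilon> \<inter> fiter f (ni i) (shift_inv (ni i) \<omega>) ` ball pm \<epsilon>) \<ge> c)"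
    using D(2) filterlim_subseq unfolding Q_def S_def by fast
qed

end
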